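(* Let $\phi$ be the density of the $k$-dimensional standard normal distribution. For all vectors $u,v\in\mathbb{R}^k$, $$\int_{\mathbb{R}^k}\Big|\sum_{j,j',j''=1}^k u_jv_{j'}v_{j''}\,\partial_{jj'j''}\phi(z)\Big|\,dz\le 2\Big(1+\sqrt{\tfrac{2}{\pi}}\Big)|u||v|^2.$$
   Context: $|\cdot|$ is the Euclidean norm; $\partial_{jj'j''}$ denotes the third partial derivative with respect to coordinates $j,j',j''$. *)

theory Defs
  imports "HOL-Analysis.Analysis"
begin

definition std_normal_density :: "(real ^ 'k) \<Rightarrow> real" where
  "std_normal_density z = (2 * pi) powr (- real CARD('k) / 2) * exp (- (norm z)\<^sup>2 / 2)"

definition partial_deriv :: "'k \<Rightarrow> ((real ^ 'k) \<Rightarrow> real) \<Rightarrow> (real ^ 'k) \<Rightarrow> real" where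
  "partial_deriv j f z = deriv (\<lambda>t. f (z + t *\<^sub>R axis j 1)) 0"

end

theory Submission
  imports Defs "HOL-Probability.Distributions"
begin

(* The one-dimensional library density of the same name would clash with the one from Defs. *)
hide_const (open) Distributions.std_normal_density

(*
  For phi = std_normal_density on R^k we show
    int |sum u_j v_j' v_j'' d_jj'j'' phi(z)| dz  <=  2 (1 + sqrt (2/pi)) |u| |v|^2.
  1. Three axis derivatives of phi give -H(z) phi(z), H the third Hermite tensor; contracting
     with u, v, v turns the integrand into |2 (u.v)(v.z) - (u.z)((v.z)^2 - |v|^2)| phi(z).
  2. With s = |u|, t = |v| and |u.v| <= s t, two AM-GM estimates bound this pointwise by
     3/2 s t^2 + t^2/(2s) (u.z)^2 + s/(2t^2) (v.z)^4.
  3. Under phi, E (a.z)^2 = |a|^2 and E (a.z)^4 = 3 |a|^4; these moments are computed by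
     writing Lebesgue measure on R^k as a product of copies of the real line and integrating
     out one coordinate at a time.
  4. Hence the integral is at most 7/2 |u| |v|^2 <= 2 (1 + sqrt (2/pi)) |u| |v|^2.
  The file follows these steps in order; the theorem at the end just chains them.
*)

lemma std_normal_density_nonneg: "0 \<le> std_normal_density (z :: real ^ 'k)"
  by (simp add: Defs.std_normal_density_def)

lemma std_normal_density_measurable[measurable]:
  "(std_normal_density :: real ^ 'k \<Rightarrow> real) \<in> borel_measurable borel"
  unfolding Defs.std_normal_density_def[abs_def] by measurable

lemma std_normal_density_along_axis:
  fixes z :: "real ^ 'k"
  shows "std_normal_density (z + t *\<^sub>R axis j 1) =
    (2 * pi) powr (- real CARD('k) / 2) * exp (- (z \<bullet> z + 2 * t * z$j + t\<^sup>2) / 2)"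
proof -
  have "(norm (z + t *\<^sub>R axis j 1))\<^sup>2 = z \<bullet> z + 2 * t * z$j + t\<^sup>2"
    unfolding power2_norm_eq_inner
    by (simp add: inner_add_left inner_add_right inner_axis inner_axis' inner_commute power2_eq_square algebra_simps)
  then show ?thesis by (simp add: Defs.std_normal_density_def)
qed

lemma std_normal_density_axis_deriv:
  fixes z :: "real ^ 'k"
  shows "((\<lambda>t. std_normal_density (z + t *\<^sub>R axis j 1)) has_real_derivative - z$j * std_normal_density z) (at 0)"
proof -
  have "((\<lambda>t. (2 * pi) powr (- real CARD('k) / 2) * exp (- (z \<bullet> z + 2 * t * z$j + t\<^sup>2) / 2))
     has_real_derivative (2 * pi) powr (- real CARD('k) / 2) * (exp (- (z \<bullet> z + 2 * 0 * z$j + 0\<^sup>2) / 2) * (- (2 * z$j + 2 * 0) / 2))) (at 0)"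
    by (intro derivative_eq_intros) auto
  then show ?thesis
    unfolding std_normal_density_along_axis
    by (rule DERIV_cong) (simp add: Defs.std_normal_density_def power2_norm_eq_inner)
qed

lemma component_along_axis_deriv:
  fixes z :: "real ^ 'k"
  shows "((\<lambda>t. (z + t *\<^sub>R axis j 1) $ i) has_real_derivative (if i = j then 1 else 0)) (at 0)"
  by (simp add: axis_def) (auto intro!: derivative_eq_intros)

lemma partial_deriv_times_std_normal_density:
  fixes p :: "real ^ 'k \<Rightarrow> real"
  assumes "((\<lambda>t. p (z + t *\<^sub>R axis j 1)) has_real_derivative dp) (at 0)"
  shows "partial_deriv j (\<lambda>z. p z * std_normal_density z) z = (dp - z$j * p z) * std_normal_density z"
  unfolding partial_deriv_def
  using DERIV_mult[OF assms std_normal_density_axis_deriv]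
  by (intro DERIV_imp_deriv) (simp add: algebra_simps)

definition hermite3 :: "real ^ 'k \<Rightarrow> 'k \<Rightarrow> 'k \<Rightarrow> 'k \<Rightarrow> real" where
  "hermite3 z j j' j'' = z$j * z$j' * z$j''
     - (if j = j' then z$j'' else 0) - (if j = j'' then z$j' else 0) - (if j' = j'' then z$j else 0)"

lemma third_partial_std_normal_density:
  fixes z :: "real ^ 'k"
  shows "partial_deriv j (partial_deriv j' (partial_deriv j'' std_normal_density)) z
    = - hermite3 z j j' j'' * std_normal_density z"
proof -
  have first: "partial_deriv j'' std_normal_density = (\<lambda>z::real^'k. - z$j'' * std_normal_density z)"
  proof
    fix z :: "real ^ 'k"
    show "partial_deriv j'' std_normal_density z = - z$j'' * std_normal_density z"
      using partial_deriv_times_std_normal_density[of "\<lambda>_. 1" z j'' 0] by simp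
  qed
  have second: "partial_deriv j' (\<lambda>z::real^'k. - z$j'' * std_normal_density z)
      = (\<lambda>z. (z$j' * z$j'' - (if j' = j'' then 1 else 0)) * std_normal_density z)"
  proof
    fix z :: "real ^ 'k"
    show "partial_deriv j' (\<lambda>z. - z$j'' * std_normal_density z) z
      = (z$j' * z$j'' - (if j' = j'' then 1 else 0)) * std_normal_density z"
      using partial_deriv_times_std_normal_density[OF DERIV_minus[OF component_along_axis_deriv[of z j' j'']]]
      by (simp add: eq_commute)
  qed
  have third: "partial_deriv j (\<lambda>z. (z$j' * z$j'' - (if j' = j'' then 1 else 0)) * std_normal_density z) z
      = ((if j' = j then 1 else 0) * z$j'' + z$j' * (if j'' = j then 1 else 0)
         - z$j * (z$j' * z$j'' - (if j' = j'' then 1 else 0))) * std_normal_density z"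
  proof (rule partial_deriv_times_std_normal_density)
    show "((\<lambda>t. (z + t *\<^sub>R axis j 1) $ j' * (z + t *\<^sub>R axis j 1) $ j'' - (if j' = j'' then 1 else 0))
      has_real_derivative (if j' = j then 1 else 0) * z$j'' + z$j' * (if j'' = j then 1 else 0)) (at 0)"
      using DERIV_diff[OF DERIV_mult[OF component_along_axis_deriv component_along_axis_deriv] DERIV_const]
      by (rule DERIV_cong) simp
  qed
  show ?thesis
    unfolding first second third by (simp add: hermite3_def algebra_simps)
qed

lemma sum3_product:
  fixes f g h :: "'a \<Rightarrow> real"
  shows "(\<Sum>j\<in>A. \<Sum>j'\<in>B. \<Sum>j''\<in>C. f j * g j' * h j'') = sum f A * sum g B * sum h C"
  by (simp flip: sum_distrib_left sum_distrib_right)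

lemma sum3_delta12:
  fixes f g h d :: "'a::finite \<Rightarrow> real"
  shows "(\<Sum>j\<in>UNIV. \<Sum>j'\<in>UNIV. \<Sum>j''\<in>UNIV. f j * g j' * h j'' * (if j = j' then d j'' else 0))
    = (\<Sum>j\<in>UNIV. f j * g j) * (\<Sum>j''\<in>UNIV. h j'' * d j'')"
proof -
  have "(\<Sum>j''\<in>UNIV. f j * g j' * h j'' * (if j = j' then d j'' else 0))
      = (if j = j' then f j * g j * (\<Sum>j''\<in>UNIV. h j'' * d j'') else 0)" for j j'
    by (simp add: sum_distrib_left mult_ac)
  then show ?thesis by (simp add: sum_distrib_right)
qed

lemma sum3_delta13:
  fixes f g h d :: "'a::finite \<Rightarrow> real"
  shows "(\<Sum>j\<in>UNIV. \<Sum>j'\<in>UNIV. \<Sum>j''\<in>UNIV. f j * g j' * h j'' * (if j = j'' then d j' else 0))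
    = (\<Sum>j\<in>UNIV. f j * h j) * (\<Sum>j'\<in>UNIV. g j' * d j')"
  by (simp add: sum_product if_distrib cong: if_cong) (simp add: mult_ac)

lemma sum3_delta23:
  fixes f g h d :: "'a::finite \<Rightarrow> real"
  shows "(\<Sum>j\<in>UNIV. \<Sum>j'\<in>UNIV. \<Sum>j''\<in>UNIV. f j * g j' * h j'' * (if j' = j'' then d j else 0))
    = (\<Sum>j\<in>UNIV. f j * d j) * (\<Sum>j'\<in>UNIV. g j' * h j')"
  by (simp add: sum_product if_distrib cong: if_cong) (simp add: mult_ac)

lemma hermite3_contraction:
  fixes u v w z :: "real ^ 'k"
  shows "(\<Sum>j\<in>UNIV. \<Sum>j'\<in>UNIV. \<Sum>j''\<in>UNIV. u$j * v$j' * w$j'' * hermite3 z j j' j'')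
    = (u \<bullet> z) * (v \<bullet> z) * (w \<bullet> z) - (u \<bullet> v) * (w \<bullet> z) - (u \<bullet> w) * (v \<bullet> z) - (v \<bullet> w) * (u \<bullet> z)"
proof -
  have "(\<Sum>j\<in>UNIV. \<Sum>j'\<in>UNIV. \<Sum>j''\<in>UNIV. u$j * v$j' * w$j'' * (z$j * z$j' * z$j''))
      = (\<Sum>j\<in>UNIV. \<Sum>j'\<in>UNIV. \<Sum>j''\<in>UNIV. (u$j * z$j) * (v$j' * z$j') * (w$j'' * z$j''))"
    by (simp add: mult_ac)
  also have "\<dots> = (\<Sum>j\<in>UNIV. u$j * z$j) * (\<Sum>j\<in>UNIV. v$j * z$j) * (\<Sum>j\<in>UNIV. w$j * z$j)"
    by (rule sum3_product)
  finally have cubic: "(\<Sum>j\<in>UNIV. \<Sum>j'\<in>UNIV. \<Sum>j''\<in>UNIV. u$j * v$j' * w$j'' * (z$j * z$j' * z$j''))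
      = (u \<bullet> z) * (v \<bullet> z) * (w \<bullet> z)"
    by (simp add: inner_vec_def)
  show ?thesis
    unfolding hermite3_def right_diff_distrib sum_subtractf
    by (simp only: cubic sum3_delta12 sum3_delta13 sum3_delta23) (simp add: inner_vec_def mult_ac)
qed

lemma third_derivative_contraction:
  fixes u v z :: "real ^ 'k"
  shows "(\<Sum>j\<in>UNIV. \<Sum>j'\<in>UNIV. \<Sum>j''\<in>UNIV.
            u $ j * v $ j' * v $ j'' * partial_deriv j (partial_deriv j' (partial_deriv j'' std_normal_density)) z)
    = (2 * (u \<bullet> v) * (v \<bullet> z) - (u \<bullet> z) * ((v \<bullet> z)\<^sup>2 - (norm v)\<^sup>2)) * std_normal_density z"
proof -
  have "(\<Sum>j\<in>UNIV. \<Sum>j'\<in>UNIV. \<Sum>j''\<in>UNIV.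
            u $ j * v $ j' * v $ j'' * partial_deriv j (partial_deriv j' (partial_deriv j'' std_normal_density)) z)
      = - (\<Sum>j\<in>UNIV. \<Sum>j'\<in>UNIV. \<Sum>j''\<in>UNIV. u $ j * v $ j' * v $ j'' * hermite3 z j j' j'') * std_normal_density z"
    by (simp add: third_partial_std_normal_density sum_distrib_left sum_distrib_right sum_negf mult_ac)
  also have "\<dots> = (2 * (u \<bullet> v) * (v \<bullet> z) - (u \<bullet> z) * ((v \<bullet> z)\<^sup>2 - (norm v)\<^sup>2)) * std_normal_density z"
    unfolding hermite3_contraction power2_norm_eq_inner
    by (simp add: power2_eq_square inner_commute algebra_simps)
  finally show ?thesis .
qed

abbreviation gauss :: "real \<Rightarrow> real" where
  "gauss \<equiv> normal_density 0 1"

lemma nn_integral_of_has_bochner_integral: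
  assumes "has_bochner_integral M f r" and "\<And>x. 0 \<le> f x"
  shows "(\<integral>\<^sup>+x. ennreal (f x) \<partial>M) = ennreal r"
  using assms by (subst nn_integral_eq_integral) (auto simp: has_bochner_integral_iff)

lemma nn_integral_linear_combination:
  assumes [measurable]: "f \<in> borel_measurable M" "g \<in> borel_measurable M" "h \<in> borel_measurable M"
    and nonneg: "\<And>x. 0 \<le> f x" "\<And>x. 0 \<le> g x" "\<And>x. 0 \<le> h x"
    and integrals: "(\<integral>\<^sup>+x. f x \<partial>M) = ennreal a" "(\<integral>\<^sup>+x. g x \<partial>M) = ennreal b" "(\<integral>\<^sup>+x. h x \<partial>M) = ennreal c"
    and values_nonneg: "0 \<le> a" "0 \<le> b" "0 \<le> c"
    and coeffs_nonneg: "0 \<le> \<alpha>" "0 \<le> \<beta>" "0 \<le> \<gamma>"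
  shows "(\<integral>\<^sup>+x. ennreal (\<alpha> * f x + \<beta> * g x + \<gamma> * h x) \<partial>M) = ennreal (\<alpha> * a + \<beta> * b + \<gamma> * c)"
proof (rule nn_integral_of_has_bochner_integral)
  have "has_bochner_integral M f a" "has_bochner_integral M g b" "has_bochner_integral M h c"
    using integrals nonneg values_nonneg by (auto intro: has_bochner_integral_nn_integral)
  then show "has_bochner_integral M (\<lambda>x. \<alpha> * f x + \<beta> * g x + \<gamma> * h x) (\<alpha> * a + \<beta> * b + \<gamma> * c)"
    by (intro has_bochner_integral_add has_bochner_integral_mult_right)
  show "0 \<le> \<alpha> * f x + \<beta> * g x + \<gamma> * h x" for x
    using nonneg coeffs_nonneg by simp
qed

lemma gauss_moments:
  "has_bochner_integral lborel gauss 1"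
  "has_bochner_integral lborel (\<lambda>y. gauss y * y) 0"
  "has_bochner_integral lborel (\<lambda>y. gauss y * y^2) 1"
  "has_bochner_integral lborel (\<lambda>y. gauss y * y^3) 0"
  "has_bochner_integral lborel (\<lambda>y. gauss y * y^4) 3"
  using std_normal_moment_even[of 0] std_normal_moment_odd[of 0] std_normal_moment_even[of 1]
    std_normal_moment_odd[of 1] std_normal_moment_even[of 2]
  by (simp_all add: numeral_eq_Suc fact_numeral)

lemma gauss_affine_moment2:
  "(\<integral>\<^sup>+y. ennreal (gauss y * (c + a * y)^2) \<partial>lborel) = ennreal (c^2 + a^2)"
proof (rule nn_integral_of_has_bochner_integral)
  have "has_bochner_integral lborel (\<lambda>y. c^2 * gauss y + (2*c*a) * (gauss y * y) + a^2 * (gauss y * y^2))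
      (c^2 * 1 + (2*c*a) * 0 + a^2 * 1)"
    by (intro has_bochner_integral_add has_bochner_integral_mult_right gauss_moments)
  moreover have "(\<lambda>y. c^2 * gauss y + (2*c*a) * (gauss y * y) + a^2 * (gauss y * y^2))
      = (\<lambda>y. gauss y * (c + a * y)^2)"
    by (simp add: power2_eq_square algebra_simps)
  ultimately show "has_bochner_integral lborel (\<lambda>y. gauss y * (c + a * y)^2) (c^2 + a^2)"
    by simp
qed simp

lemma gauss_affine_moment4:
  "(\<integral>\<^sup>+y. ennreal (gauss y * (c + a * y)^4) \<partial>lborel) = ennreal (c^4 + 6 * a^2 * c^2 + 3 * a^4)"
proof (rule nn_integral_of_has_bochner_integral)
  have "has_bochner_integral lborel (\<lambda>y. c^4 * gauss y + (4*c^3*a) * (gauss y * y) + (6*c^2*a^2) * (gauss y * y^2)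
      + (4*c*a^3) * (gauss y * y^3) + a^4 * (gauss y * y^4))
      (c^4 * 1 + (4*c^3*a) * 0 + (6*c^2*a^2) * 1 + (4*c*a^3) * 0 + a^4 * 3)"
    by (intro has_bochner_integral_add has_bochner_integral_mult_right gauss_moments)
  moreover have "(\<lambda>y. c^4 * gauss y + (4*c^3*a) * (gauss y * y) + (6*c^2*a^2) * (gauss y * y^2)
      + (4*c*a^3) * (gauss y * y^3) + a^4 * (gauss y * y^4)) = (\<lambda>y. gauss y * (c + a * y)^4)"
    by (simp add: power2_eq_square power3_eq_cube power4_eq_xxxx algebra_simps)
  ultimately show "has_bochner_integral lborel (\<lambda>y. gauss y * (c + a * y)^4) (c^4 + 6 * a^2 * c^2 + 3 * a^4)"
    by (simp add: algebra_simps)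
qed simp

definition gauss_prod :: "'i set \<Rightarrow> ('i \<Rightarrow> real) \<Rightarrow> real" where
  "gauss_prod I x = (\<Prod>i\<in>I. gauss (x i))"

lemma gauss_prod_nonneg: "0 \<le> gauss_prod I x"
  unfolding gauss_prod_def by (intro prod_nonneg) auto

lemma gauss_prod_measurable[measurable]: "gauss_prod I \<in> borel_measurable (Pi\<^sub>M I (\<lambda>_. lborel))"
  unfolding gauss_prod_def by measurable

interpretation lborel_product: product_sigma_finite "\<lambda>_. lborel :: real measure"
  by standard

lemma gauss_prod_total:
  assumes "finite I"
  shows "(\<integral>\<^sup>+x. ennreal (gauss_prod I x) \<partial>Pi\<^sub>M I (\<lambda>_. lborel)) = 1"
proof -
  have "(\<integral>\<^sup>+x. ennreal (gauss_prod I x) \<partial>Pi\<^sub>M I (\<lambda>_. lborel)) = (\<Prod>i\<in>I. \<integral>\<^sup>+y. ennreal (gauss y) \<partial>lborel)"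
    unfolding gauss_prod_def using assms
    by (subst prod_ennreal[symmetric])
      (simp_all add: lborel_product.product_nn_integral_prod[of I "\<lambda>_ y. ennreal (gauss y)"])
  also have "\<dots> = 1"
    using nn_integral_of_has_bochner_integral[OF gauss_moments(1)] by simp
  finally show ?thesis .
qed

lemma gauss_prod_nn_integral_insert:
  fixes F :: "real \<Rightarrow> real" and a :: "'i \<Rightarrow> real"
  assumes I: "finite I" "i \<notin> I" and F[measurable]: "F \<in> borel_measurable borel"
  shows "(\<integral>\<^sup>+x. ennreal (gauss_prod (insert i I) x * F (\<Sum>j\<in>insert i I. a j * x j)) \<partial>Pi\<^sub>M (insert i I) (\<lambda>_. lborel))
    = (\<integral>\<^sup>+x. ennreal (gauss_prod I x) * (\<integral>\<^sup>+y. ennreal (gauss y * F ((\<Sum>j\<in>I. a j * x j) + a i * y)) \<partial>lborel)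
        \<partial>Pi\<^sub>M I (\<lambda>_. lborel))"
proof -
  have prod_upd: "gauss_prod (insert i I) (x(i := y)) = gauss y * gauss_prod I x" for x y
  proof -
    have "(\<Prod>j\<in>I. gauss ((x(i := y)) j)) = gauss_prod I x"
      unfolding gauss_prod_def using I by (intro prod.cong) auto
    then show ?thesis using I by (simp add: gauss_prod_def)
  qed
  have sum_upd: "(\<Sum>j\<in>insert i I. a j * (x(i := y)) j) = (\<Sum>j\<in>I. a j * x j) + a i * y" for x y
  proof -
    have "(\<Sum>j\<in>I. a j * (x(i := y)) j) = (\<Sum>j\<in>I. a j * x j)"
      using I by (intro sum.cong) auto
    then show ?thesis using I by simp
  qed
  show ?thesis
  proof (subst lborel_product.product_nn_integral_insert[OF I], measurable, rule nn_integral_cong)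
    fix x
    show "(\<integral>\<^sup>+y. ennreal (gauss_prod (insert i I) (x(i := y)) * F (\<Sum>j\<in>insert i I. a j * (x(i := y)) j)) \<partial>lborel)
      = ennreal (gauss_prod I x) * (\<integral>\<^sup>+y. ennreal (gauss y * F ((\<Sum>j\<in>I. a j * x j) + a i * y)) \<partial>lborel)"
      unfolding prod_upd sum_upd
      by (subst nn_integral_cmult[symmetric])
        (auto simp: gauss_prod_nonneg ennreal_mult'[symmetric] mult_ac intro!: nn_integral_cong)
  qed
qed

lemma gauss_prod_moment2:
  fixes a :: "'i \<Rightarrow> real"
  assumes "finite I"
  shows "(\<integral>\<^sup>+x. ennreal (gauss_prod I x * (\<Sum>i\<in>I. a i * x i)^2) \<partial>Pi\<^sub>M I (\<lambda>_. lborel))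
    = ennreal (\<Sum>i\<in>I. (a i)^2)"
  using assms
proof (induction I rule: finite_induct)
  case (insert i I)
  let ?c = "\<lambda>x. \<Sum>j\<in>I. a j * x j"
  have "(\<integral>\<^sup>+x. ennreal (gauss_prod (insert i I) x * (\<Sum>j\<in>insert i I. a j * x j)^2) \<partial>Pi\<^sub>M (insert i I) (\<lambda>_. lborel))
      = (\<integral>\<^sup>+x. ennreal (gauss_prod I x) * ennreal (?c x ^ 2 + (a i)^2) \<partial>Pi\<^sub>M I (\<lambda>_. lborel))"
    by (subst gauss_prod_nn_integral_insert[OF insert(1,2)]) (simp_all add: gauss_affine_moment2)
  also have "\<dots> = (\<integral>\<^sup>+x. ennreal (1 * (gauss_prod I x * ?c x ^ 2) + (a i)^2 * gauss_prod I x + 0 * gauss_prod I x)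
      \<partial>Pi\<^sub>M I (\<lambda>_. lborel))"
    by (intro nn_integral_cong) (simp add: gauss_prod_nonneg ennreal_mult[symmetric] algebra_simps)
  also have "\<dots> = ennreal (1 * (\<Sum>j\<in>I. (a j)^2) + (a i)^2 * 1 + 0 * 1)"
    using insert gauss_prod_total[OF insert(1)]
    by (intro nn_integral_linear_combination) (auto simp: gauss_prod_nonneg sum_nonneg)
  also have "1 * (\<Sum>j\<in>I. (a j)^2) + (a i)^2 * 1 + 0 * 1 = (\<Sum>j\<in>insert i I. (a j)^2)"
    using insert by simp
  finally show ?case .
qed simp

lemma gauss_prod_moment4:
  fixes a :: "'i \<Rightarrow> real"
  assumes "finite I"
  shows "(\<integral>\<^sup>+x. ennreal (gauss_prod I x * (\<Sum>i\<in>I. a i * x i)^4) \<partial>Pi\<^sub>M I (\<lambda>_. lborel))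
    = ennreal (3 * (\<Sum>i\<in>I. (a i)^2)^2)"
  using assms
proof (induction I rule: finite_induct)
  case (insert i I)
  let ?c = "\<lambda>x. \<Sum>j\<in>I. a j * x j" and ?s = "\<Sum>j\<in>I. (a j)^2"
  have "(\<integral>\<^sup>+x. ennreal (gauss_prod (insert i I) x * (\<Sum>j\<in>insert i I. a j * x j)^4) \<partial>Pi\<^sub>M (insert i I) (\<lambda>_. lborel))
      = (\<integral>\<^sup>+x. ennreal (gauss_prod I x) * ennreal (?c x ^ 4 + 6 * (a i)^2 * ?c x ^ 2 + 3 * (a i)^4) \<partial>Pi\<^sub>M I (\<lambda>_. lborel))"
    by (subst gauss_prod_nn_integral_insert[OF insert(1,2)]) (simp_all add: gauss_affine_moment4)
  also have "\<dots> = (\<integral>\<^sup>+x. ennreal (1 * (gauss_prod I x * ?c x ^ 4) + (6 * (a i)^2) * (gauss_prod I x * ?c x ^ 2)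
      + (3 * (a i)^4) * gauss_prod I x) \<partial>Pi\<^sub>M I (\<lambda>_. lborel))"
    by (intro nn_integral_cong) (simp add: gauss_prod_nonneg ennreal_mult[symmetric] algebra_simps)
  also have "\<dots> = ennreal (1 * (3 * ?s^2) + (6 * (a i)^2) * ?s + (3 * (a i)^4) * 1)"
    using insert gauss_prod_total[OF insert(1)] gauss_prod_moment2[OF insert(1)]
    by (intro nn_integral_linear_combination) (auto simp: gauss_prod_nonneg sum_nonneg)
  also have "1 * (3 * ?s^2) + (6 * (a i)^2) * ?s + (3 * (a i)^4) * 1 = 3 * (\<Sum>j\<in>insert i I. (a j)^2)^2"
    using insert by (simp add: power2_eq_square power4_eq_xxxx algebra_simps)
  finally show ?case .
qed simp

lemma norm_sq_Basis: "(norm z)\<^sup>2 = (\<Sum>b\<in>Basis. (z \<bullet> b)\<^sup>2)"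
  by (simp only: power2_norm_eq_inner, subst euclidean_inner, simp add: power2_eq_square)

lemma std_normal_density_gauss_prod:
  fixes z :: "real ^ 'k"
  shows "std_normal_density z = gauss_prod Basis (\<lambda>b. z \<bullet> b)"
proof -
  have "gauss_prod Basis (\<lambda>b. z \<bullet> b) = (\<Prod>b\<in>Basis. 1 / sqrt (2 * pi) * exp (- (z \<bullet> b)\<^sup>2 / 2))"
    by (simp add: gauss_prod_def normal_density_def)
  also have "\<dots> = (\<Prod>b\<in>(Basis :: (real^'k) set). 1 / sqrt (2 * pi)) * (\<Prod>b\<in>Basis. exp (- (z \<bullet> b)\<^sup>2 / 2))"
    by (rule prod.distrib)
  also have "\<dots> = (1 / sqrt (2 * pi)) ^ CARD('k) * exp (- (\<Sum>b\<in>Basis. (z \<bullet> b)\<^sup>2) / 2)"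
    by (simp add: exp_sum sum_divide_distrib flip: sum_negf)
  also have "(1 / sqrt (2 * pi)) ^ CARD('k) = (2 * pi) powr (- real CARD('k) / 2)"
    by (simp add: sqrt_def powr_realpow[symmetric] powr_minus_divide powr_powr divide_simps
       root_powr_inverse real_root_pos_pos_le powr_divide)
  finally show ?thesis by (simp add: Defs.std_normal_density_def norm_sq_Basis)
qed

text \<open>Integrals of \<open>\<phi>(z) F(a \<bullet> z)\<close> reduce to integrals over the product space, since Lebesgue
  measure on \<open>\<real>\<^sup>k\<close> is the image of the product of the coordinate measures.\<close>

lemma std_normal_nn_integral_directional:
  fixes a :: "real ^ 'k" and F :: "real \<Rightarrow> real"
  assumes [measurable]: "F \<in> borel_measurable borel"
  shows "(\<integral>\<^sup>+z. ennreal (std_normal_density z * F (a \<bullet> z)) \<partial>lborel)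
    = (\<integral>\<^sup>+x. ennreal (gauss_prod Basis x * F (\<Sum>b\<in>Basis. (a \<bullet> b) * x b)) \<partial>Pi\<^sub>M Basis (\<lambda>_. lborel))"
proof -
  have coord: "(\<Sum>b'\<in>Basis. x b' *\<^sub>R b') \<bullet> b = x b" if "b \<in> Basis" for x and b :: "real ^ 'k"
    using that by (simp add: inner_sum_left inner_Basis if_distrib cong: if_cong)
  have "(\<integral>\<^sup>+z. ennreal (std_normal_density z * F (a \<bullet> z)) \<partial>lborel)
      = (\<integral>\<^sup>+z. ennreal (gauss_prod Basis (\<lambda>b. z \<bullet> b) * F (\<Sum>b\<in>Basis. (a \<bullet> b) * (z \<bullet> b))) \<partial>lborel)"
    by (subst euclidean_inner) (simp add: std_normal_density_gauss_prod)
  also have "\<dots> = (\<integral>\<^sup>+x. ennreal (gauss_prod Basis (\<lambda>b. (\<Sum>b'\<in>Basis. x b' *\<^sub>R b') \<bullet> b) *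
      F (\<Sum>b\<in>Basis. (a \<bullet> b) * ((\<Sum>b'\<in>Basis. x b' *\<^sub>R b') \<bullet> b))) \<partial>Pi\<^sub>M Basis (\<lambda>_. lborel))"
    by (subst lborel_eq) (simp add: nn_integral_distr gauss_prod_def)
  also have "\<dots> = (\<integral>\<^sup>+x. ennreal (gauss_prod Basis x * F (\<Sum>b\<in>Basis. (a \<bullet> b) * x b)) \<partial>Pi\<^sub>M Basis (\<lambda>_. lborel))"
    by (simp add: coord gauss_prod_def cong: prod.cong sum.cong)
  finally show ?thesis .
qed

lemma std_normal_directional_moments:
  fixes a :: "real ^ 'k"
  shows "(\<integral>\<^sup>+z. ennreal (std_normal_density (z :: real ^ 'k)) \<partial>lborel) = 1"
    and "(\<integral>\<^sup>+z. ennreal (std_normal_density z * (a \<bullet> z)^2) \<partial>lborel) = ennreal ((norm a)^2)"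
    and "(\<integral>\<^sup>+z. ennreal (std_normal_density z * (a \<bullet> z)^4) \<partial>lborel) = ennreal (3 * (norm a)^4)"
proof -
  show "(\<integral>\<^sup>+z. ennreal (std_normal_density (z :: real ^ 'k)) \<partial>lborel) = 1"
    using std_normal_nn_integral_directional[of "\<lambda>_. 1" a] gauss_prod_total[of "Basis :: (real ^ 'k) set"] by simp
  show "(\<integral>\<^sup>+z. ennreal (std_normal_density z * (a \<bullet> z)^2) \<partial>lborel) = ennreal ((norm a)^2)"
    using std_normal_nn_integral_directional[of "\<lambda>s. s^2" a] gauss_prod_moment2[of Basis "\<lambda>b. a \<bullet> b"]
    by (simp add: norm_sq_Basis)
  show "(\<integral>\<^sup>+z. ennreal (std_normal_density z * (a \<bullet> z)^4) \<partial>lborel) = ennreal (3 * (norm a)^4)"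
    using std_normal_nn_integral_directional[of "\<lambda>s. s^4" a] gauss_prod_moment4[of Basis "\<lambda>b. a \<bullet> b"]
    by (simp add: norm_sq_Basis[symmetric] power_mult[symmetric])
qed

lemma std_normal_quartic_integral:
  fixes u v :: "real ^ 'k" and A B C :: real
  assumes "0 \<le> A" "0 \<le> B" "0 \<le> C"
  shows "(\<integral>\<^sup>+z. ennreal ((A + B * (u \<bullet> z)\<^sup>2 + C * (v \<bullet> z)^4) * std_normal_density z) \<partial>lborel)
    = ennreal (A + B * (norm u)\<^sup>2 + C * (3 * (norm v)^4))"
proof -
  have "(\<integral>\<^sup>+z. ennreal (A * std_normal_density z + B * (std_normal_density z * (u \<bullet> z)\<^sup>2)
      + C * (std_normal_density z * (v \<bullet> z)^4)) \<partial>lborel) = ennreal (A * 1 + B * (norm u)\<^sup>2 + C * (3 * (norm v)^4))"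
    using assms std_normal_directional_moments(1) std_normal_directional_moments(2)[of u]
      std_normal_directional_moments(3)[of v]
    by (intro nn_integral_linear_combination) (auto simp: std_normal_density_nonneg)
  then show ?thesis
    by (simp add: algebra_simps)
qed

text \<open>Pointwise AM-GM bound: with \<open>p = u \<bullet> z\<close>, \<open>q = v \<bullet> z\<close>, \<open>w = u \<bullet> v\<close>, \<open>s = |u|\<close>, \<open>t = |v|\<close>,
  the integrand is dominated by a combination of 1, \<open>p\<^sup>2\<close> and \<open>q\<^sup>4\<close> whose \<phi>-integral is
  \<open>7/2 s t\<^sup>2\<close>.\<close>

lemma cubic_form_amgm_bound:
  fixes w p q s t :: real
  assumes s: "s > 0" and t: "t > 0" and w: "\<bar>w\<bar> \<le> s * t"
  shows "\<bar>2 * w * q - p * (q\<^sup>2 - t\<^sup>2)\<bar> \<le> 3/2 * s * t\<^sup>2 + t\<^sup>2 / (2 * s) * p\<^sup>2 + s / (2 * t\<^sup>2) * q^4"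
proof -
  let ?W = "q\<^sup>2 - t\<^sup>2"
  have "\<bar>2 * w * q - p * ?W\<bar> \<le> 2 * \<bar>w\<bar> * \<bar>q\<bar> + \<bar>p\<bar> * \<bar>?W\<bar>"
    by (simp add: abs_mult abs_triangle_ineq4[THEN order_trans])
  also have "2 * \<bar>w\<bar> * \<bar>q\<bar> \<le> 2 * (s * t) * \<bar>q\<bar>"
    using w by (intro mult_right_mono) auto
  also have "2 * (s * t) * \<bar>q\<bar> \<le> s * t\<^sup>2 + s * q\<^sup>2"
  proof -
    have "0 \<le> s * (t - \<bar>q\<bar>)\<^sup>2" using s by simp
    then show ?thesis by (simp add: power2_eq_square algebra_simps)
  qed
  also have "\<bar>p\<bar> * \<bar>?W\<bar> \<le> t\<^sup>2 / (2 * s) * p\<^sup>2 + s / (2 * t\<^sup>2) * ?W\<^sup>2"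
  proof -
    have "0 \<le> (t\<^sup>2 * \<bar>p\<bar> - s * \<bar>?W\<bar>)\<^sup>2" by simp
    then have "2 * s * t\<^sup>2 * (\<bar>p\<bar> * \<bar>?W\<bar>) \<le> t^4 * p\<^sup>2 + s\<^sup>2 * ?W\<^sup>2"
      by (simp add: power2_eq_square power4_eq_xxxx algebra_simps)
    then show ?thesis
      using s t by (simp add: field_simps power2_eq_square power4_eq_xxxx)
  qed
  also have "s * t\<^sup>2 + s * q\<^sup>2 + (t\<^sup>2 / (2 * s) * p\<^sup>2 + s / (2 * t\<^sup>2) * ?W\<^sup>2)
      = 3/2 * s * t\<^sup>2 + t\<^sup>2 / (2 * s) * p\<^sup>2 + s / (2 * t\<^sup>2) * q^4"
    using s t by (simp add: field_simps power2_eq_square power4_eq_xxxx)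
  finally show ?thesis by simp
qed

lemma hermite_integral_bound:
  fixes u v :: "real ^ 'k"
  shows "(\<integral>\<^sup>+z. ennreal (\<bar>2 * (u \<bullet> v) * (v \<bullet> z) - (u \<bullet> z) * ((v \<bullet> z)\<^sup>2 - (norm v)\<^sup>2)\<bar> * std_normal_density z) \<partial>lborel)
    \<le> ennreal (7/2 * norm u * (norm v)\<^sup>2)"
proof (cases "u = 0 \<or> v = 0")
  case True
  then show ?thesis by auto
next
  case False
  let ?s = "norm u" and ?t = "norm v"
  have s: "?s > 0" and t: "?t > 0" using False by auto
  have "(\<integral>\<^sup>+z. ennreal (\<bar>2 * (u \<bullet> v) * (v \<bullet> z) - (u \<bullet> z) * ((v \<bullet> z)\<^sup>2 - ?t\<^sup>2)\<bar> * std_normal_density z) \<partial>lborel)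
      \<le> (\<integral>\<^sup>+z. ennreal ((3/2 * ?s * ?t\<^sup>2 + ?t\<^sup>2 / (2 * ?s) * (u \<bullet> z)\<^sup>2 + ?s / (2 * ?t\<^sup>2) * (v \<bullet> z)^4)
          * std_normal_density z) \<partial>lborel)"
    by (intro nn_integral_mono ennreal_leI mult_right_mono std_normal_density_nonneg
        cubic_form_amgm_bound s t Cauchy_Schwarz_ineq2)
  also have "\<dots> = ennreal (3/2 * ?s * ?t\<^sup>2 + ?t\<^sup>2 / (2 * ?s) * ?s\<^sup>2 + ?s / (2 * ?t\<^sup>2) * (3 * ?t^4))"
    using s t by (intro std_normal_quartic_integral) auto
  also have "3/2 * ?s * ?t\<^sup>2 + ?t\<^sup>2 / (2 * ?s) * ?s\<^sup>2 + ?s / (2 * ?t\<^sup>2) * (3 * ?t^4) = 7/2 * ?s * ?t\<^sup>2"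
    using s t by (simp add: field_simps power2_eq_square power4_eq_xxxx)
  finally show ?thesis .
qed

lemma const_ineq: "7/2 \<le> 2 * (1 + sqrt (2 / pi))"
proof -
  have "9/16 \<le> 2 / pi"
    using pi_approx(2) pi_gt_zero by (simp add: field_simps)
  then have "sqrt (9/16) \<le> sqrt (2 / pi)"
    by (rule real_sqrt_le_mono)
  moreover have "sqrt (9/16 :: real) = 3/4"
    by (simp add: real_sqrt_divide)
  ultimately show ?thesis by simp
qed

theorem lemma3p4:
  fixes u v :: "real ^ 'k"
  shows "(\<integral>\<^sup>+ z. ennreal \<bar>\<Sum>j\<in>UNIV. \<Sum>j'\<in>UNIV. \<Sum>j''\<in>UNIV.
            u $ j * v $ j' * v $ j'' *
            partial_deriv j (partial_deriv j' (partial_deriv j'' std_normal_density)) z\<bar> \<partial>lborel)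
         \<le> ennreal (2 * (1 + sqrt (2 / pi)) * norm u * (norm v)\<^sup>2)"
proof -
  have "(\<integral>\<^sup>+ z. ennreal \<bar>\<Sum>j\<in>UNIV. \<Sum>j'\<in>UNIV. \<Sum>j''\<in>UNIV.
            u $ j * v $ j' * v $ j'' *
            partial_deriv j (partial_deriv j' (partial_deriv j'' std_normal_density)) z\<bar> \<partial>lborel)
      = (\<integral>\<^sup>+z. ennreal (\<bar>2 * (u \<bullet> v) * (v \<bullet> z) - (u \<bullet> z) * ((v \<bullet> z)\<^sup>2 - (norm v)\<^sup>2)\<bar> * std_normal_density z) \<partial>lborel)"
    by (simp add: third_derivative_contraction abs_mult std_normal_density_nonneg)
  also have "\<dots> \<le> ennreal (7/2 * norm u * (norm v)\<^sup>2)"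
    by (rule hermite_integral_bound)
  also have "\<dots> \<le> ennreal (2 * (1 + sqrt (2 / pi)) * norm u * (norm v)\<^sup>2)"
    using const_ineq by (intro ennreal_leI mult_right_mono) auto
  finally show ?thesis .
qed

end
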